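(* Let $a_0>0$, $l\in2\mathbb{N}^*$ and $k\in\mathbb{N}^*$. Let $\widehat T^k(0):=\{y=(y_1,\dots,y_k)\in\mathbb{R}^k: y_1<y_2<\dots<y_k\}$ and define $N=(N^1,\dots,N^k):\widehat T^k(0)\to\mathbb{R}^k$ by $$N^i(y):=a_0ly_i^{l-1}-2\sum_{j\ne i}\frac1{y_i-y_j},\qquad i=1,\dots,k.$$ Then $N$ has exactly one zero $y^*\in\widehat T^k(0)$, and the Brouwer degree of $N$ at $0$ equals $1$: $\deg(N,U,0)=1$ for every bounded open set $U$ with $y^*\in U$ and $\overline U\subset\widehat T^k(0)$. *)

theory Defs
  imports "HOL-Analysis.Analysis"
begin

text \<open>Ordered open cone  T^k(0) = {y. y_1 < ... < y_k}; the index type 'n is a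
  finite linear order (of cardinality k).\<close>
definition ordered_cone :: "(real^('n::{finite,linorder})) set" where
  "ordered_cone = {y. \<forall>i j. i < j \<longrightarrow> y $ i < y $ j}"

definition Nmap :: "real \<Rightarrow> nat \<Rightarrow> real^('n::{finite,linorder}) \<Rightarrow> real^('n::{finite,linorder})" where
  "Nmap a0 l y = (\<chi> i. a0 * real l * (y $ i) ^ (l - 1)
                     - 2 * (\<Sum>j\<in>UNIV - {i}. 1 / (y $ i - y $ j)))"

text \<open>Brouwer degree of a C^1 map (analytic definition, e.g. Deimling):
  f is C^1 on an open neighbourhood S of closure U, U bounded open, y not in f(boundary U);
  deg(f,U,y) = d means: for every regular value p of f with |p - y| < dist(y, f(boundary U)),
  the sum of the signs of the Jacobian determinants over the preimages of p in U equals d.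
  (By Sard's theorem such regular values exist, so d is uniquely determined.)\<close>
definition has_brouwer_degree ::
  "(real^('n::finite) \<Rightarrow> real^'n) \<Rightarrow> (real^'n) set \<Rightarrow> real^'n \<Rightarrow> int \<Rightarrow> bool" where
  "has_brouwer_degree f U y d \<longleftrightarrow>
     bounded U \<and> open U \<and> y \<notin> f ` frontier U \<and>
     (\<exists>S f'. open S \<and> closure U \<subseteq> S \<and> continuous_on S f' \<and>
        (\<forall>x\<in>S. (f has_derivative blinfun_apply (f' x)) (at x))) \<and>
     (\<forall>p. dist p y < infdist y (f ` frontier U) \<longrightarrow>
        (\<forall>x\<in>closure U. f x = p \<longrightarrow> det (matrix (frechet_derivative f (at x))) \<noteq> 0) \<longrightarrow>
        (\<Sum>x\<in>{x\<in>U. f x = p}. sgn (det (matrix (frechet_derivative f (at x))))) = of_int d)"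

end

theory Submission
  imports Defs
begin

text \<open>
  N is strictly monotone on the cone: in (N x - N y) \<bullet> (x - y) the power terms contribute
  positively because l - 1 is odd, and the interaction terms pair up into nonnegative terms
  (1/v - 1/u)(u - v) with u v > 0.  Hence N is injective.  The identity
  N(x) \<bullet> x = a0 l \<Sum> x_i^l - k(k-1) bounds x, and summing the equations over an initial
  segment of indices bounds the gaps from below, whenever N(x) is bounded; so N is proper on
  the cone and its image is closed.  By invariance of domain the image is also open, so N is a
  homeomorphism of the cone onto \<real>^k.  Its unique zero y* is the image of 0 under the
  inverse, and a regular value p with |p| < dist(0, N(\<partial>U)) has exactly one preimage,
  which lies in U because the lifted segment from y* never meets \<partial>U.  The Jacobian of N
  is positive semidefinite, so its determinant there is positive and the degree is 1.
\<close>

lemma sum_offdiag_symmetrize: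
  fixes f :: "'a \<Rightarrow> 'a \<Rightarrow> 'b::comm_semiring_1"
  assumes "finite A"
  shows "2 * (\<Sum>i\<in>A. \<Sum>j\<in>A-{i}. f i j) = (\<Sum>i\<in>A. \<Sum>j\<in>A-{i}. f i j + f j i)"
proof -
  have "A - {i} = {j\<in>A. i \<noteq> j}" "A - {i} = {j\<in>A. j \<noteq> i}" for i by auto
  then have "(\<Sum>i\<in>A. \<Sum>j\<in>A-{i}. f i j) = (\<Sum>i\<in>A. \<Sum>j\<in>A-{i}. f j i)"
    using sum.swap_restrict[OF assms assms, of "\<lambda>i j. f j i" "\<lambda>j i. i \<noteq> j"] by simp
  then show ?thesis by (simp add: mult_2 sum.distrib)
qed

lemma sum_offdiag_antisym:
  fixes f :: "'a \<Rightarrow> 'a \<Rightarrow> 'b::linordered_idom"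
  assumes "finite A" and "\<And>i j. f j i = - f i j"
  shows "(\<Sum>i\<in>A. \<Sum>j\<in>A-{i}. f i j) = 0"
proof -
  have "f i j + f j i = 0" for i j using assms(2)[of i j] by simp
  then show ?thesis using sum_offdiag_symmetrize[OF assms(1), of f] by simp
qed

lemma divide_diff_swap:
  fixes a b c :: "'a::field"
  shows "c / (b - a) = - (c / (a - b))"
  by (metis minus_diff_eq divide_minus_right)

lemma odd_power_strict_mono:
  fixes a b :: real
  assumes "odd n" and "a < b"
  shows "a ^ n < b ^ n"
proof -
  have "a ^ n \<le> b ^ n" by (rule power_mono_odd[OF assms(1) less_imp_le[OF assms(2)]])
  moreover have "a ^ n \<noteq> b ^ n"
  proof
    assume "a ^ n = b ^ n"
    then have "root n (a ^ n) = b" by (intro odd_real_root_unique[OF assms(1)]) simp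
    moreover have "root n (a ^ n) = a" by (rule odd_real_root_unique[OF assms(1) refl])
    ultimately show False using assms(2) by (metis less_irrefl)
  qed
  ultimately show ?thesis by (rule order_le_neq_trans)
qed

lemma odd_power_diff_mult_pos:
  fixes a b :: real
  assumes "odd n" and "a \<noteq> b"
  shows "0 < (a ^ n - b ^ n) * (a - b)"
proof (cases "a < b")
  case True
  with odd_power_strict_mono[OF assms(1) True] show ?thesis
    by (intro mult_neg_neg) (simp_all only: diff_less_0_iff_less)
next
  case False
  then have "b < a" using assms(2) by simp
  with odd_power_strict_mono[OF assms(1) this] show ?thesis
    by (intro mult_pos_pos) (simp_all only: diff_gt_0_iff_gt)
qed

lemma inverse_diff_mult_diff_nonneg:
  fixes u v :: real
  assumes "0 < u * v"
  shows "0 \<le> (1/v - 1/u) * (u - v)"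
proof -
  have "u \<noteq> 0" "v \<noteq> 0" using assms by auto
  then have "1/v - 1/u = (u - v) / (u * v)"
    by (simp add: diff_frac_eq mult.commute)
  then have "(1/v - 1/u) * (u - v) = (u - v)\<^sup>2 / (u * v)"
    by (simp add: power2_eq_square)
  then show ?thesis using assms by simp
qed

lemma det_pos_if_psd:
  fixes J :: "real^'n^'n"
  assumes psd: "\<And>h. 0 \<le> h \<bullet> (J *v h)" and nonsingular: "det J \<noteq> 0"
  shows "0 < det J"
proof (rule ccontr)
  assume "\<not> 0 < det J"
  define M where "M t = (1 - t) *\<^sub>R mat 1 + t *\<^sub>R J" for t :: real
  have "continuous_on {0..1} (\<lambda>t. det (M t))"
    unfolding M_def det_def by (intro continuous_intros)
  moreover have "det (M 1) \<le> 0" "0 \<le> det (M 0)"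
    using \<open>\<not> 0 < det J\<close> by (simp_all add: M_def)
  ultimately obtain t where t: "0 \<le> t" "t \<le> 1" "det (M t) = 0"
    using IVT2'[of "\<lambda>t. det (M t)" 1 0 0] by auto
  have "t \<noteq> 1" using t(3) nonsingular by (auto simp: M_def)
  \<comment> \<open>For t < 1 the quadratic form of M t is positive definite, so M t is injective.\<close>
  have "inj ((*v) (M t))"
  proof (rule inj_onI)
    fix a b assume "M t *v a = M t *v b"
    then have "(a - b) \<bullet> (M t *v (a - b)) = 0" by (simp add: matrix_vector_mult_diff_distrib)
    then have "(1 - t) * ((a - b) \<bullet> (a - b)) + t * ((a - b) \<bullet> (J *v (a - b))) = 0"
      by (simp add: M_def matrix_vector_mult_add_rdistrib inner_add_right
          flip: scaleR_matrix_vector_assoc)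
    moreover have "0 \<le> t * ((a - b) \<bullet> (J *v (a - b)))" using t psd by simp
    ultimately have "(1 - t) * ((a - b) \<bullet> (a - b)) \<le> 0" by linarith
    moreover have "0 < 1 - t" using \<open>t \<noteq> 1\<close> t(2) by simp
    ultimately have "(a - b) \<bullet> (a - b) \<le> 0" by (simp add: mult_le_0_iff)
    then show "a = b" by (metis eq_iff_diff_eq_0 inner_eq_zero_iff inner_ge_zero order_antisym)
  qed
  with t(3) show False by (simp add: det_eq_0_rank less_rank_noninjective)
qed

lemma closed_image_if_sublevels_in_compact:
  fixes f :: "'a::metric_space \<Rightarrow> 'b::real_normed_vector"
  assumes cont: "continuous_on C f"
    and proper: "\<And>r. \<exists>K. compact K \<and> K \<subseteq> C \<and> {x\<in>C. norm (f x) \<le> r} \<subseteq> K"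
  shows "closed (f ` C)"
proof -
  have "q \<in> f ` C" if q: "q \<in> closure (f ` C)" for q
  proof -
    obtain K where K: "compact K" "K \<subseteq> C" "{x\<in>C. norm (f x) \<le> norm q + 1} \<subseteq> K"
      using proper by blast
    define K0 where "K0 = K \<inter> f -` cball 0 (norm q + 1)"
    have "continuous_on K f" using cont K(2) continuous_on_subset by blast
    then have "closed K0"
      unfolding K0_def using continuous_closed_preimage compact_imp_closed[OF K(1)] closed_cball by blast
    then have "compact (K \<inter> K0)" by (rule compact_Int_closed[OF K(1)])
    moreover have "K \<inter> K0 = K0" by (auto simp: K0_def)
    ultimately have "compact K0" by simp
    then have "closed (f ` K0)"
      using \<open>continuous_on K f\<close> by (intro compact_imp_closed compact_continuous_image)
        (auto simp: K0_def intro: continuous_on_subset)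
    moreover have "q \<in> closure (f ` K0)"
      unfolding closure_approachable
    proof (intro allI impI)
      fix e :: real assume "0 < e"
      then have "0 < min e 1" by simp
      then obtain x where x: "x \<in> C" "dist (f x) q < min e 1"
        using q unfolding closure_approachable by blast
      then have "norm (f x) \<le> norm q + 1"
        using norm_triangle_ineq2[of "f x" q] by (simp add: dist_norm)
      then show "\<exists>y\<in>f ` K0. dist y q < e" using x K(3) by (auto simp: K0_def)
    qed
    ultimately have "q \<in> f ` K0" by (simp add: closure_closed)
    then show ?thesis using K(2) by (auto simp: K0_def)
  qed
  then show ?thesis using closure_subset_eq by blast
qed

lemma inverse_in_if_norm_less_infdist_frontier:
  fixes f :: "'a::topological_space \<Rightarrow> 'b::real_normed_vector"
  assumes cont: "continuous_on UNIV g" and inverse: "\<And>q. f (g q) = q"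
    and "g 0 \<in> U" and small: "norm p < infdist 0 (f ` frontier U)"
  shows "g p \<in> U"
proof (rule ccontr)
  assume "g p \<notin> U"
  define G where "G = (\<lambda>t. g (t *\<^sub>R p)) ` {0..1::real}"
  have "connected G"
    unfolding G_def by (intro connected_continuous_image continuous_on_compose2[OF cont])
      (auto intro: continuous_intros)
  moreover have "g 0 \<in> G" unfolding G_def by (auto intro!: image_eqI[where x=0])
  moreover have "g p \<in> G" unfolding G_def by (auto intro!: image_eqI[where x=1])
  ultimately have "G \<inter> frontier U \<noteq> {}"
    using \<open>g 0 \<in> U\<close> \<open>g p \<notin> U\<close> by (intro connected_Int_frontier) auto
  then obtain t where t: "0 \<le> t" "t \<le> 1" "g (t *\<^sub>R p) \<in> frontier U"
    unfolding G_def by auto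
  have "infdist 0 (f ` frontier U) \<le> dist 0 (f (g (t *\<^sub>R p)))"
    using t by (intro infdist_le) auto
  also have "\<dots> \<le> norm p" using t by (simp add: inverse mult_left_le_one_le)
  finally show False using small by simp
qed

lemma matrix_frechet_derivative_apply:
  fixes f :: "real^'n \<Rightarrow> real^'m"
  assumes "(f has_derivative blinfun_apply D) (at x)"
  shows "matrix (frechet_derivative f (at x)) *v h = D h"
proof -
  have "frechet_derivative f (at x) = blinfun_apply D"
    using frechet_derivative_at[OF assms] by simp
  then show ?thesis
    using fun_cong[OF matrix_vector_mul(3)[OF blinfun.bounded_linear_right[of D]], of h] by simp
qed

lemma has_brouwer_degree_homeomorphism_psd:
  fixes f :: "real^'n \<Rightarrow> real^'n" and D :: "real^'n \<Rightarrow> (real^'n) \<Rightarrow>\<^sub>L (real^'n)"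
  assumes "open C" and cont: "continuous_on UNIV g"
    and g_in: "\<And>q. g q \<in> C" and f_g: "\<And>q. f (g q) = q" and g_f: "\<And>x. x \<in> C \<Longrightarrow> g (f x) = x"
    and "continuous_on C D" and deriv: "\<And>x. x \<in> C \<Longrightarrow> (f has_derivative blinfun_apply (D x)) (at x)"
    and psd: "\<And>x h. x \<in> C \<Longrightarrow> 0 \<le> h \<bullet> D x h"
    and U: "bounded U" "open U" "g 0 \<in> U" "closure U \<subseteq> C"
  shows "has_brouwer_degree f U 0 1"
  unfolding has_brouwer_degree_def
proof (intro conjI allI impI)
  show "bounded U" "open U" using U by auto
  show "0 \<notin> f ` frontier U"
  proof
    assume "0 \<in> f ` frontier U"
    then obtain z where z: "z \<in> frontier U" "f z = 0" by auto
    then have "z \<in> C" using U(4) unfolding frontier_def by blast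
    then have "z = g 0" using g_f z(2) by metis
    then show False using z(1) U(3) by (simp add: frontier_def interior_open[OF U(2)])
  qed
  show "\<exists>S f'. open S \<and> closure U \<subseteq> S \<and> continuous_on S f' \<and>
          (\<forall>x\<in>S. (f has_derivative blinfun_apply (f' x)) (at x))"
    using \<open>open C\<close> U(4) \<open>continuous_on C D\<close> deriv by (intro exI[of _ C] exI[of _ D]) auto
  fix p assume small: "dist p 0 < infdist 0 (f ` frontier U)"
    and regular: "\<forall>x\<in>closure U. f x = p \<longrightarrow> det (matrix (frechet_derivative f (at x))) \<noteq> 0"
  have "g p \<in> U"
    by (rule inverse_in_if_norm_less_infdist_frontier[OF cont f_g U(3) small[unfolded dist_norm diff_zero]])
  have unique: "x = g p" if "x \<in> U" "f x = p" for x
  proof -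
    have "x \<in> C" using that(1) U(4) closure_subset by blast
    then show ?thesis using g_f that(2) by metis
  qed
  have preimage: "{x\<in>U. f x = p} = {g p}"
  proof
    show "{x\<in>U. f x = p} \<subseteq> {g p}" using unique by blast
    show "{g p} \<subseteq> {x\<in>U. f x = p}" using \<open>g p \<in> U\<close> f_g by blast
  qed
  have "0 < det (matrix (frechet_derivative f (at (g p))))"
  proof (rule det_pos_if_psd)
    show "0 \<le> h \<bullet> (matrix (frechet_derivative f (at (g p))) *v h)" for h
      using matrix_frechet_derivative_apply[OF deriv[OF g_in]] psd[OF g_in] by simp
    show "det (matrix (frechet_derivative f (at (g p)))) \<noteq> 0"
      using regular closure_subset[of U] \<open>g p \<in> U\<close> f_g by blast
  qed
  then show "(\<Sum>x\<in>{x\<in>U. f x = p}. sgn (det (matrix (frechet_derivative f (at x))))) = of_int 1"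
    by (simp add: preimage)
qed

lemma open_ordered_cone: "open (ordered_cone :: (real^'n::{finite,linorder}) set)"
proof -
  have "(ordered_cone :: (real,'n) vec set) = (\<Inter>i. \<Inter>j\<in>{j. i < j}. {y. y $ i < y $ j})"
    by (auto simp: ordered_cone_def)
  also have "open \<dots>" by (intro open_INT ballI open_Collect_less continuous_intros) auto
  finally show ?thesis .
qed

lemma ordered_cone_nonempty: "(ordered_cone :: (real^'n::{finite,linorder}) set) \<noteq> {}"
proof -
  have "card {m::'n. m < i} < card {m. m < j}" if "i < j" for i j :: 'n
    using that by (intro psubset_card_mono) auto
  then have "(\<chi> i. real (card {j. j < i})) \<in> (ordered_cone :: (real,'n) vec set)"
    by (simp add: ordered_cone_def)
  then show ?thesis by (metis empty_iff)
qed

lemma ordered_cone_nth_neq: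
  assumes "x \<in> ordered_cone" and "i \<noteq> j"
  shows "x $ i \<noteq> x $ j"
proof -
  have "i < j \<or> j < i" using assms(2) by auto
  then show ?thesis using assms(1) unfolding ordered_cone_def by force
qed

lemma ordered_cone_diff_mult_pos:
  assumes "x \<in> ordered_cone" "y \<in> ordered_cone" and "i \<noteq> j"
  shows "0 < (x $ i - x $ j) * (y $ i - y $ j)"
proof (cases "i < j")
  case True
  then have "x $ i < x $ j" "y $ i < y $ j" using assms(1,2) unfolding ordered_cone_def by auto
  then show ?thesis by (intro mult_neg_neg) (simp_all only: diff_less_0_iff_less)
next
  case False
  then have "j < i" using assms(3) by simp
  then have "x $ j < x $ i" "y $ j < y $ i" using assms(1,2) unfolding ordered_cone_def by auto
  then show ?thesis by (intro mult_pos_pos) (simp_all only: diff_gt_0_iff_gt)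
qed

section \<open>Injectivity and surjectivity of N\<close>

lemma Nmap_nth:
  "Nmap a0 l y $ i = a0 * real l * (y $ i) ^ (l - 1) - 2 * (\<Sum>j\<in>UNIV - {i}. 1 / (y $ i - y $ j))"
  by (simp add: Nmap_def)

lemma continuous_on_Nmap: "continuous_on ordered_cone (Nmap a0 l)"
  unfolding Nmap_def by (intro continuous_intros) (auto dest: ordered_cone_nth_neq)

lemma Nmap_strict_monotone:
  fixes x y :: "real^'n::{finite,linorder}"
  assumes "a0 > 0" "even l" "l > 0" and x: "x \<in> ordered_cone" and y: "y \<in> ordered_cone"
    and "x \<noteq> y"
  shows "0 < (Nmap a0 l x - Nmap a0 l y) \<bullet> (x - y)"
proof -
  define P where "P i = a0 * real l * (((x$i)^(l-1) - (y$i)^(l-1)) * (x$i - y$i))" for i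
  define h where "h i j = (1/(y$i - y$j) - 1/(x$i - x$j)) * (x$i - y$i)" for i j
  have "(Nmap a0 l x - Nmap a0 l y) $ i = a0 * real l * ((x$i)^(l-1) - (y$i)^(l-1))
      + 2 * (\<Sum>j\<in>UNIV-{i}. 1/(y$i - y$j) - 1/(x$i - x$j))" for i
    by (simp add: Nmap_nth sum_subtractf right_diff_distrib)
  then have "(Nmap a0 l x - Nmap a0 l y) $ i * (x$i - y$i) = P i + 2 * (\<Sum>j\<in>UNIV-{i}. h i j)" for i
    unfolding P_def h_def by (simp add: sum_distrib_right distrib_right mult.assoc)
  then have inner: "(Nmap a0 l x - Nmap a0 l y) \<bullet> (x - y)
      = (\<Sum>i\<in>UNIV. P i) + 2 * (\<Sum>i\<in>UNIV. \<Sum>j\<in>UNIV-{i}. h i j)"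
    by (simp add: inner_vec_def sum.distrib sum_distrib_left)
  have "0 \<le> h i j + h j i" if "i \<noteq> j" for i j
  proof -
    have "h i j + h j i = (1/(y$i - y$j) - 1/(x$i - x$j)) * ((x$i - x$j) - (y$i - y$j))"
      unfolding h_def divide_diff_swap[of 1 "y$j" "y$i"] divide_diff_swap[of 1 "x$j" "x$i"] by algebra
    then show ?thesis
      using inverse_diff_mult_diff_nonneg[OF ordered_cone_diff_mult_pos[OF x y that]] by simp
  qed
  then have interaction: "0 \<le> 2 * (\<Sum>i\<in>UNIV. \<Sum>j\<in>UNIV-{i}. h i j)"
    unfolding sum_offdiag_symmetrize[OF finite_class.finite_UNIV] by (intro sum_nonneg) auto
  have "odd (l - 1)" using assms(2,3) by simp
  then have "0 < P i" if "x$i \<noteq> y$i" for i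
    using odd_power_diff_mult_pos[OF _ that] assms(1,3) by (simp add: P_def)
  moreover have "0 \<le> P i" for i
    using calculation by (cases "x$i = y$i") (auto simp: P_def intro: less_imp_le)
  moreover obtain i where "x$i \<noteq> y$i" using \<open>x \<noteq> y\<close> by (metis vec_eq_iff)
  ultimately have "0 < (\<Sum>i\<in>UNIV. P i)" by (intro sum_pos2) auto
  then show ?thesis using inner interaction by linarith
qed

lemma inj_on_Nmap:
  assumes "a0 > 0" "even l" "l > 0"
  shows "inj_on (Nmap a0 l) (ordered_cone :: (real^'n::{finite,linorder}) set)"
proof (rule inj_onI, rule ccontr)
  fix x y assume "x \<in> ordered_cone" "y \<in> ordered_cone" "Nmap a0 l x = Nmap a0 l y" "x \<noteq> y"
  then show False using Nmap_strict_monotone[OF assms, of x y] by simp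
qed

lemma Nmap_inner_self:
  fixes x :: "real^'n::{finite,linorder}"
  assumes x: "x \<in> ordered_cone" and "l > 0"
  shows "Nmap a0 l x \<bullet> x = a0 * real l * (\<Sum>i\<in>UNIV. (x$i)^l) - real CARD('n) * (real CARD('n) - 1)"
proof -
  define g where "g i j = x$i / (x$i - x$j)" for i j
  have "Nmap a0 l x $ i * x$i = a0 * real l * (x$i)^l - 2 * (\<Sum>j\<in>UNIV-{i}. g i j)" for i
    using power_minus_mult[OF \<open>l > 0\<close>, of "x$i"]
    by (simp add: Nmap_nth g_def sum_distrib_right left_diff_distrib mult.assoc)
  moreover have "g i j + g j i = 1" if "i \<noteq> j" for i j
  proof -
    have "x$i - x$j \<noteq> 0" using ordered_cone_nth_neq[OF x that] by simp
    then have "x$i / (x$i - x$j) - x$j / (x$i - x$j) = 1" by (simp add: diff_divide_distrib[symmetric])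
    then show ?thesis unfolding g_def divide_diff_swap[of "x$j" "x$j" "x$i"] by simp
  qed
  then have "2 * (\<Sum>i\<in>UNIV. \<Sum>j\<in>UNIV-{i}. g i j) = real CARD('n) * (real CARD('n) - 1)"
    unfolding sum_offdiag_symmetrize[OF finite_class.finite_UNIV] by (simp add: card_Diff_subset)
  ultimately show ?thesis
    by (simp add: inner_vec_def sum_subtractf sum_distrib_left mult.commute)
qed

lemma ordered_cone_abs_le_if_Nmap_bounded:
  fixes x :: "real^'n::{finite,linorder}"
  assumes a0: "a0 > 0" and l: "even l" "l > 0" and x: "x \<in> ordered_cone"
    and Q: "norm (Nmap a0 l x) \<le> Q"
  shows "\<bar>x$i\<bar> \<le> max 1 ((real CARD('n) * Q + real CARD('n)^2) / (a0 * real l))"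
proof -
  define k where "k = real CARD('n)"
  let ?S = "(\<lambda>i. \<bar>x$i\<bar>) ` UNIV"
  have "Max ?S \<in> ?S" by (intro Max_in) auto
  then obtain m where "Max ?S = \<bar>x$m\<bar>" by blast
  then have m: "\<bar>x$i\<bar> \<le> \<bar>x$m\<bar>" for i using Max_ge[of ?S "\<bar>x$i\<bar>"] by auto
  define M where "M = \<bar>x$m\<bar>"
  have "a0 * real l * M ^ l \<le> a0 * real l * (\<Sum>i\<in>UNIV. (x$i)^l)"
  proof -
    have "M ^ l = (x$m)^l" unfolding M_def using l(1) by (simp add: power_even_abs)
    also have "\<dots> \<le> (\<Sum>i\<in>UNIV. (x$i)^l)"
      using l(1) by (intro member_le_sum) (auto simp: zero_le_even_power)
    finally show ?thesis using a0 by (intro mult_left_mono) auto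
  qed
  also have "\<dots> = Nmap a0 l x \<bullet> x + k * (k - 1)"
    by (simp add: Nmap_inner_self[OF x l(2)] k_def)
  also have "Nmap a0 l x \<bullet> x \<le> (\<Sum>i\<in>(UNIV::'n set). Q * M)"
    unfolding inner_vec_def inner_real_def
  proof (intro sum_mono)
    fix i
    have "Nmap a0 l x $ i * x$i \<le> \<bar>Nmap a0 l x $ i\<bar> * \<bar>x$i\<bar>" by (simp add: abs_mult[symmetric])
    also have "\<dots> \<le> Q * M"
      using order.trans[OF component_le_norm_cart Q] order.trans[OF norm_ge_zero Q] m[of i]
      unfolding M_def by (intro mult_mono) auto
    finally show "Nmap a0 l x $ i * x$i \<le> Q * M" by simp
  qed
  also have "(\<Sum>i\<in>(UNIV::'n set). Q * M) = k * Q * M" by (simp add: k_def)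
  finally have main: "a0 * real l * M ^ l \<le> k * Q * M + k * (k - 1)" by simp
  have "M \<le> (k * Q + k^2) / (a0 * real l)" if "1 < M"
  proof -
    have "M^2 \<le> M^l" using that l by (intro power_increasing) (auto simp: even_iff_mod_2_eq_zero)
    then have "a0 * real l * M^2 \<le> a0 * real l * M^l" using a0 by (intro mult_left_mono) auto
    moreover have "k * (k - 1) \<le> k^2 * M"
    proof -
      have "k * (k - 1) \<le> k^2" by (simp add: k_def power2_eq_square algebra_simps)
      also have "\<dots> \<le> k^2 * M" using mult_left_mono[of 1 M "k^2"] that by simp
      finally show ?thesis .
    qed
    ultimately have "(a0 * real l * M) * M \<le> (k * Q + k^2) * M"
      using main by (simp add: power2_eq_square algebra_simps)
    then have "a0 * real l * M \<le> k * Q + k^2" using that by simp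
    then show ?thesis using a0 l(2) by (simp add: field_simps)
  qed
  then show ?thesis using m[of i] unfolding M_def k_def by fastforce
qed

lemma Nmap_sum_initial_segment:
  fixes x :: "real^'n::{finite,linorder}"
  assumes x: "x \<in> ordered_cone"
  shows "(\<Sum>a\<in>{..i}. Nmap a0 l x $ a - a0 * real l * (x$a)^(l-1))
    = 2 * (\<Sum>a\<in>{..i}. \<Sum>b\<in>UNIV-{..i}. 1 / (x$b - x$a))"
proof -
  define f where "f a b = 1 / (x$b - x$a)" for a b
  define A where "A = {..i}"
  have "Nmap a0 l x $ a - a0 * real l * (x$a)^(l-1)
      = 2 * (\<Sum>b\<in>A-{a}. f a b) + 2 * (\<Sum>b\<in>UNIV-A. f a b)" if "a \<in> A" for a
  proof -
    have "(\<Sum>b\<in>UNIV-{a}. f a b) = (\<Sum>b\<in>(A-{a}) \<union> (UNIV-A). f a b)"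
      using that by (intro sum.cong) auto
    also have "\<dots> = (\<Sum>b\<in>A-{a}. f a b) + (\<Sum>b\<in>UNIV-A. f a b)"
      by (intro sum.union_disjoint) auto
    finally have "(\<Sum>b\<in>UNIV-{a}. f a b) = (\<Sum>b\<in>A-{a}. f a b) + (\<Sum>b\<in>UNIV-A. f a b)" .
    moreover have "(\<Sum>b\<in>UNIV-{a}. 1 / (x$a - x$b)) = - (\<Sum>b\<in>UNIV-{a}. f a b)"
      unfolding f_def sum_negf[symmetric] by (intro sum.cong refl) (rule divide_diff_swap)
    ultimately show ?thesis by (simp add: Nmap_nth)
  qed
  then have "(\<Sum>a\<in>A. Nmap a0 l x $ a - a0 * real l * (x$a)^(l-1))
      = 2 * (\<Sum>a\<in>A. \<Sum>b\<in>A-{a}. f a b) + 2 * (\<Sum>a\<in>A. \<Sum>b\<in>UNIV-A. f a b)"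
    by (simp add: sum.distrib sum_distrib_left)
  moreover have "(\<Sum>a\<in>A. \<Sum>b\<in>A-{a}. f a b) = 0"
    using divide_diff_swap unfolding f_def by (intro sum_offdiag_antisym) (auto simp: A_def)
  ultimately show ?thesis by (simp add: A_def f_def)
qed

lemma ordered_cone_gap_ge_if_Nmap_bounded:
  fixes x :: "real^'n::{finite,linorder}"
  assumes a0: "a0 > 0" and x: "x \<in> ordered_cone"
    and Q: "norm (Nmap a0 l x) \<le> Q" and R: "\<And>a. \<bar>x$a\<bar> \<le> R" and "i < j"
  shows "2 / (real CARD('n) * (Q + a0 * real l * R^(l-1))) \<le> x$j - x$i"
proof -
  define f where "f a b = 1 / (x$b - x$a)" for a b
  define A where "A = {..i}"
  define B where "B = real CARD('n) * (Q + a0 * real l * R^(l-1))"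
  have f_pos: "0 \<le> f a b" if "a \<in> A" "b \<notin> A" for a b
  proof -
    have "a < b" using that by (auto simp: A_def not_le intro: le_less_trans)
    then show ?thesis using x unfolding f_def ordered_cone_def by (simp add: less_imp_le)
  qed
  have "f i j \<le> (\<Sum>a\<in>A. \<Sum>b\<in>UNIV-A. f a b)"
  proof -
    have "f i j \<le> (\<Sum>b\<in>UNIV-A. f i b)"
      using \<open>i < j\<close> f_pos by (intro member_le_sum) (auto simp: A_def)
    also have "\<dots> \<le> (\<Sum>a\<in>A. \<Sum>b\<in>UNIV-A. f a b)"
      using f_pos by (intro member_le_sum[of i A] sum_nonneg) (auto simp: A_def)
    finally show ?thesis .
  qed
  then have "2 * f i j \<le> (\<Sum>a\<in>A. Nmap a0 l x $ a - a0 * real l * (x$a)^(l-1))"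
    unfolding A_def Nmap_sum_initial_segment[OF x] by (simp add: f_def)
  also have "\<dots> \<le> (\<Sum>a\<in>(UNIV::'n set). Q + a0 * real l * R^(l-1))"
  proof -
    have "Nmap a0 l x $ a \<le> Q" for a
      using component_le_norm_cart[of "Nmap a0 l x" a] Q by simp
    moreover have "- ((x$a)^(l-1)) \<le> R^(l-1)" for a
      using power_mono[OF R[of a] abs_ge_zero, of "l-1"] by (metis abs_ge_minus_self order.trans power_abs)
    ultimately have "Nmap a0 l x $ a - a0 * real l * (x$a)^(l-1) \<le> Q + a0 * real l * R^(l-1)" for a
      using a0 by (smt (verit) mult_left_mono mult_minus_right of_nat_0_le_iff mult_nonneg_nonneg)
    moreover have "0 \<le> Q + a0 * real l * R^(l-1)"
      using Q R[of i] a0 by (smt (verit) norm_ge_zero mult_nonneg_nonneg of_nat_0_le_iff zero_le_power)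
    ultimately show ?thesis by (intro order.trans[OF sum_mono sum_mono2]) auto
  qed
  finally have "2 / (x$j - x$i) \<le> B" by (simp add: f_def B_def)
  moreover have "0 < x$j - x$i" using x \<open>i < j\<close> unfolding ordered_cone_def by simp
  ultimately show ?thesis unfolding B_def[symmetric]
    by (smt (verit) divide_le_eq divide_pos_pos mult.commute)
qed

lemma Nmap_sublevel_in_compact:
  assumes a0: "a0 > 0" and l: "even l" "l > 0"
  shows "\<exists>K. compact K \<and> K \<subseteq> (ordered_cone :: (real^'n::{finite,linorder}) set) \<and>
           {x\<in>ordered_cone. norm (Nmap a0 l x) \<le> r} \<subseteq> K"
proof -
  define Q where "Q = max r 0"
  define R where "R = max 1 ((real CARD('n) * Q + real CARD('n)^2) / (a0 * real l))"
  define \<delta> where "\<delta> = 2 / (real CARD('n) * (Q + a0 * real l * R^(l-1)))"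
  define K where "K = {x::(real,'n) vec. (\<forall>i. \<bar>x$i\<bar> \<le> R) \<and> (\<forall>i j. i < j \<longrightarrow> \<delta> \<le> x$j - x$i)}"
  have "0 < \<delta>" unfolding \<delta>_def using a0 l(2)
    by (intro divide_pos_pos mult_pos_pos add_nonneg_pos) (auto simp: Q_def R_def)
  then have in_cone: "K \<subseteq> ordered_cone" unfolding K_def ordered_cone_def by force
  have sublevel: "{x\<in>ordered_cone. norm (Nmap a0 l x) \<le> r} \<subseteq> K"
  proof safe
    fix x :: "(real,'n) vec" assume x: "x \<in> ordered_cone" "norm (Nmap a0 l x) \<le> r"
    then have "norm (Nmap a0 l x) \<le> Q" by (simp add: Q_def)
    with ordered_cone_abs_le_if_Nmap_bounded[OF a0 l x(1)]
      ordered_cone_gap_ge_if_Nmap_bounded[OF a0 x(1)]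
    show "x \<in> K" by (auto simp: K_def R_def \<delta>_def)
  qed
  have "compact K"
    unfolding compact_eq_bounded_closed
  proof
    have "norm x \<le> real CARD('n) * R" if "x \<in> K" for x
      using norm_le_l1_cart[of x] sum_mono[of UNIV "\<lambda>i. \<bar>x$i\<bar>" "\<lambda>_. R"] that
      by (simp add: K_def)
    then show "bounded K" unfolding bounded_iff by blast
    have "K = (\<Inter>i. {x. \<bar>x$i\<bar> \<le> R}) \<inter> (\<Inter>i. \<Inter>j\<in>{j. i < j}. {x. \<delta> \<le> x$j - x$i})"
      unfolding K_def by auto
    also have "closed \<dots>" by (intro closed_Int closed_INT ballI closed_Collect_le continuous_intros)
    finally show "closed K" .
  qed
  then show ?thesis using in_cone sublevel by (intro exI[of _ K]) simp
qed

lemma Nmap_image_eq_UNIV: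
  assumes "a0 > 0" "even l" "l > 0"
  shows "Nmap a0 l ` (ordered_cone :: (real^'n::{finite,linorder}) set) = UNIV"
proof -
  let ?T = "Nmap a0 l ` (ordered_cone :: (real,'n) vec set)"
  have "open ?T"
    by (rule invariance_of_domain[OF continuous_on_Nmap open_ordered_cone inj_on_Nmap[OF assms]])
  moreover have "closed ?T"
    by (rule closed_image_if_sublevels_in_compact[OF continuous_on_Nmap Nmap_sublevel_in_compact[OF assms]])
  moreover have "?T \<noteq> {}" using ordered_cone_nonempty by simp
  moreover have "connected (UNIV :: (real,'n) vec set)" by (simp add: path_connected_imp_connected)
  ultimately show ?thesis unfolding connected_clopen by auto
qed

section \<open>The derivative of N\<close>

definition Nmap_deriv ::
    "real \<Rightarrow> nat \<Rightarrow> real^('n::{finite,linorder}) \<Rightarrow> real^('n::{finite,linorder}) \<Rightarrow> real^('n::{finite,linorder})"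
  where
  "Nmap_deriv a0 l x h = (\<chi> i. a0 * real l * (real (l-1) * (x$i)^(l-2) * h$i)
                     + 2 * (\<Sum>j\<in>UNIV-{i}. (h$i - h$j) / (x$i - x$j)^2))"

lemma has_derivative_vec_nth [derivative_intros]: "((\<lambda>y. y $ i) has_derivative (\<lambda>h. h $ i)) F"
  by (rule bounded_linear_imp_has_derivative) (rule bounded_linear_vec_nth)

lemma has_derivative_vecI:
  fixes f :: "'a::real_normed_vector \<Rightarrow> real^'n"
  assumes "\<And>i. ((\<lambda>x. f x $ i) has_derivative (\<lambda>h. f' h $ i)) (at a)"
  shows "(f has_derivative f') (at a)"
  using assms has_derivative_componentwise_within[of f f' a UNIV]
  by (auto simp: Basis_vec_def inner_axis)

lemma Nmap_has_derivative:
  fixes x :: "real^'n::{finite,linorder}"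
  assumes x: "x \<in> ordered_cone" and "l > 0"
  shows "(Nmap a0 l has_derivative Nmap_deriv a0 l x) (at x)"
proof (rule has_derivative_vecI)
  fix i :: 'n
  have interaction: "((\<lambda>y. 1 / (y$i - y$j)) has_derivative (\<lambda>h. - ((h$i - h$j) / (x$i - x$j)^2))) (at x)"
    if "j \<in> UNIV - {i}" for j
    using ordered_cone_nth_neq[OF x, of i j] that
    by (auto intro!: derivative_eq_intros simp: power2_eq_square field_simps fun_eq_iff minus_divide_left)
  have power: "((\<lambda>y. (y$i)^(l-1)) has_derivative (\<lambda>h. real (l-1) * (x$i)^(l-2) * h$i)) (at x)"
    using \<open>l > 0\<close> by (auto intro!: derivative_eq_intros simp: diff_diff_add numeral_2_eq_2)
  have "((\<lambda>y. a0 * real l * (y$i)^(l-1) - 2 * (\<Sum>j\<in>UNIV-{i}. 1 / (y$i - y$j))) has_derivative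
      (\<lambda>h. a0 * real l * (real (l-1) * (x$i)^(l-2) * h$i)
         - 2 * (\<Sum>j\<in>UNIV-{i}. - ((h$i - h$j) / (x$i - x$j)^2)))) (at x)"
    by (intro has_derivative_diff has_derivative_mult_right has_derivative_sum power interaction)
  then show "((\<lambda>y. Nmap a0 l y $ i) has_derivative (\<lambda>h. Nmap_deriv a0 l x h $ i)) (at x)"
    by (simp add: Nmap_nth Nmap_deriv_def sum_negf)
qed

lemma bounded_linear_Nmap_deriv:
  "x \<in> ordered_cone \<Longrightarrow> l > 0 \<Longrightarrow> bounded_linear (Nmap_deriv a0 l x)"
  using Nmap_has_derivative has_derivative_bounded_linear by blast

lemma continuous_on_Nmap_deriv:
  assumes "l > 0"
  shows "continuous_on ordered_cone (\<lambda>x. Blinfun (Nmap_deriv a0 l x))"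
proof (rule continuous_on_blinfun_componentwise)
  fix e
  have "continuous_on ordered_cone (\<lambda>x. Nmap_deriv a0 l x e)"
    unfolding Nmap_deriv_def by (intro continuous_intros) (auto dest: ordered_cone_nth_neq)
  then show "continuous_on ordered_cone (\<lambda>x. blinfun_apply (Blinfun (Nmap_deriv a0 l x)) e)"
    by (rule continuous_on_eq) (simp add: bounded_linear_Blinfun_apply[OF bounded_linear_Nmap_deriv] assms)
qed

lemma Nmap_deriv_psd:
  fixes x :: "real^'n::{finite,linorder}"
  assumes x: "x \<in> ordered_cone" and "a0 > 0" "even l"
  shows "0 \<le> h \<bullet> Nmap_deriv a0 l x h"
proof -
  define P where "P i = a0 * real l * (real (l-1) * (x$i)^(l-2) * (h$i * h$i))" for i
  define g where "g i j = h$i * (h$i - h$j) / (x$i - x$j)^2" for i j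
  have "h$i * Nmap_deriv a0 l x h $ i = P i + 2 * (\<Sum>j\<in>UNIV-{i}. g i j)" for i
    unfolding Nmap_deriv_def P_def g_def by (simp add: distrib_left sum_distrib_left mult_ac)
  then have inner: "h \<bullet> Nmap_deriv a0 l x h = (\<Sum>i\<in>UNIV. P i) + 2 * (\<Sum>i\<in>UNIV. \<Sum>j\<in>UNIV-{i}. g i j)"
    by (simp add: inner_vec_def sum.distrib sum_distrib_left)
  have "0 \<le> P i" for i
    using assms(2,3) by (simp add: P_def zero_le_even_power)
  moreover have "g i j + g j i = (h$i - h$j)^2 / (x$i - x$j)^2" for i j
    by (simp add: g_def power2_commute[of "x$j"] add_divide_distrib[symmetric] power2_eq_square algebra_simps)
  then have "0 \<le> 2 * (\<Sum>i\<in>UNIV. \<Sum>j\<in>UNIV-{i}. g i j)"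
    unfolding sum_offdiag_symmetrize[OF finite_class.finite_UNIV] by (intro sum_nonneg) simp
  ultimately show ?thesis unfolding inner by (simp add: sum_nonneg)
qed

theorem mainTheorem5:
  fixes a0 :: real and l :: nat
  assumes "a0 > 0" and "even l" and "l > 0"
  shows "\<exists>ystar\<in>(ordered_cone :: (real^('n::{finite,linorder})) set).
           Nmap a0 l ystar = 0 \<and>
           (\<forall>z\<in>ordered_cone. Nmap a0 l z = 0 \<longrightarrow> z = ystar) \<and>
           (\<forall>U. bounded U \<and> open U \<and> ystar \<in> U \<and> closure U \<subseteq> ordered_cone \<longrightarrow>
                has_brouwer_degree (Nmap a0 l) U 0 1)"
proof -
  let ?C = "ordered_cone :: (real,'n) vec set"
  define g where "g = inv_into ?C (Nmap a0 l)"
  have surj: "Nmap a0 l ` ?C = UNIV" by (rule Nmap_image_eq_UNIV[OF assms])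
  then have g_in: "g q \<in> ?C" and N_g: "Nmap a0 l (g q) = q" for q
    unfolding g_def by (simp_all add: inv_into_into f_inv_into_f)
  have g_N: "g (Nmap a0 l x) = x" if "x \<in> ?C" for x
    unfolding g_def by (rule inv_into_f_f[OF inj_on_Nmap[OF assms] that])
  have "continuous_on UNIV g"
    using continuous_on_inverse_open[OF open_ordered_cone continuous_on_Nmap _ g_N] surj by simp
  moreover have "(Nmap a0 l has_derivative blinfun_apply (Blinfun (Nmap_deriv a0 l x))) (at x)"
    and "0 \<le> h \<bullet> blinfun_apply (Blinfun (Nmap_deriv a0 l x)) h" if "x \<in> ?C" for x h
    using Nmap_has_derivative[OF that] Nmap_deriv_psd[OF that] assms
    by (simp_all add: bounded_linear_Blinfun_apply[OF bounded_linear_Nmap_deriv[OF that]])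
  ultimately have "has_brouwer_degree (Nmap a0 l) U 0 1"
    if "bounded U \<and> open U \<and> g 0 \<in> U \<and> closure U \<subseteq> ?C" for U
    using that has_brouwer_degree_homeomorphism_psd[OF open_ordered_cone _ g_in N_g g_N
        continuous_on_Nmap_deriv[OF assms(3)]] by blast
  then show ?thesis
    using g_in N_g g_N by (metis (no_types, lifting))
qed

end
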